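(* Let $A$ be an infinite alphabet. If $X \subseteq A^*$ is recognizable, then there exists an equivalence relation $\sim$ on $A$ of finite index such that $X = \pi_\sim^{-1}(\pi_\sim(X))$, where $\pi_\sim\colon A^* \to (A/{\sim})^*$ is the projection morphism of $\sim$.
   Context: $A^*$ denotes the free monoid of finite words over $A$. For an equivalence relation $\sim$ on $A$, the projection morphism $\pi_\sim\colon A^*\to (A/{\sim})^*$ is the monoid morphism sending each letter $a$ to its equivalence class $[a]_\sim$. A subset $S$ of a monoid $M$ is recognizable if there exist a finite monoid $N$, a monoid morphism $\varphi\colon M \to N$ and a subset $T \subseteq N$ with $S = \varphi^{-1}(T)$. *)

theory Defs
  imports "HOL-Algebra.Group"
begin

definition free_monoid :: "'a list monoid" where
  "free_monoid = \<lparr>carrier = UNIV, mult = (@), one = []\<rparr>"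

definition monoid_morphism :: "('a, 'c) monoid_scheme \<Rightarrow> ('b, 'd) monoid_scheme \<Rightarrow> ('a \<Rightarrow> 'b) \<Rightarrow> bool" where
  "monoid_morphism M N phi \<longleftrightarrow> phi \<in> hom M N \<and> phi \<one>\<^bsub>M\<^esub> = \<one>\<^bsub>N\<^esub>"

definition recognized_by :: "('a, 'c) monoid_scheme \<Rightarrow> 'a set \<Rightarrow> ('b, 'd) monoid_scheme \<Rightarrow> ('a \<Rightarrow> 'b) \<Rightarrow> 'b set \<Rightarrow> bool" where
  "recognized_by M S N phi T \<longleftrightarrow>
     monoid N \<and> finite (carrier N) \<and> monoid_morphism M N phi \<and> T \<subseteq> carrier N \<and>
     S = {x \<in> carrier M. phi x \<in> T}"

definition proj :: "('a \<times> 'a) set \<Rightarrow> 'a list \<Rightarrow> 'a set list" where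
  "proj R w = map (\<lambda>a. R `` {a}) w"

end

theory Submission
  imports Defs
begin

text \<open>A morphism \<open>\<phi>\<close> from \<open>A\<^sup>*\<close> is determined on each word by the letter images \<open>\<phi>[a]\<close>.
  If its target is finite, the kernel of \<open>a \<mapsto> \<phi>[a]\<close> is therefore an equivalence of finite
  index whose projection identifies only words with the same image under \<open>\<phi>\<close>, and every
  recognized set \<open>\<phi>\<^sup>-\<^sup>1(T)\<close> is saturated by that projection.\<close>

lemma finite_quotient_kernel: "finite (range f) \<Longrightarrow> finite (UNIV // kernel f)"
  by (simp add: quotient_kernel_eq_image)

lemma proj_kernel_eq_iff: "proj (kernel f) u = proj (kernel f) w \<longleftrightarrow> map f u = map f w"
proof -
  have proj_kernel: "proj (kernel f) v = map (\<lambda>b. f -` {b}) (map f v)" for v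
    by (simp add: proj_def kernel_Image)
  have "inj_on (map (\<lambda>b. f -` {b})) (lists (range f))"
    using inj_on_vimage_image[of f UNIV] by (simp add: inj_on_map_lists)
  then show ?thesis
    unfolding proj_kernel by (rule inj_on_eq_iff) auto
qed

lemma free_monoid_hom_append:
  assumes "\<phi> \<in> hom free_monoid N"
  shows "\<phi> (u @ v) = \<phi> u \<otimes>\<^bsub>N\<^esub> \<phi> v"
  using hom_mult[OF assms] by (simp add: free_monoid_def)

lemma free_monoid_hom_eqI:
  assumes hom: "\<phi> \<in> hom free_monoid N"
    and "map (\<lambda>a. \<phi> [a]) u = map (\<lambda>a. \<phi> [a]) w"
  shows "\<phi> u = \<phi> w"
  using assms(2)
proof (induction u arbitrary: w)
  case Nil
  then show ?case by simp
next
  case (Cons a u)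
  then obtain b w' where w: "w = b # w'" and "\<phi> [a] = \<phi> [b]"
    and "map (\<lambda>a. \<phi> [a]) u = map (\<lambda>a. \<phi> [a]) w'"
    by (cases w) simp_all
  with Cons.IH have "\<phi> ([a] @ u) = \<phi> ([b] @ w')"
    by (simp only: free_monoid_hom_append[OF hom])
  with w show ?case
    by simp
qed

lemma vimage_image_vimage_eq:
  assumes "\<And>u w. g u = g w \<Longrightarrow> f u = f w"
  shows "g -` g ` (f -` T) = f -` T"
  using assms by blast

theorem proposition5:
  fixes X :: "'a list set" and N :: "('b, 'd) monoid_scheme" and phi :: "'a list \<Rightarrow> 'b" and T :: "'b set"
  assumes "infinite (UNIV :: 'a set)"
    and "recognized_by free_monoid X N phi T"
  shows "\<exists>R. equiv UNIV R \<and> finite (UNIV // R) \<and> X = proj R -` (proj R ` X)"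
proof -
  have hom: "phi \<in> hom free_monoid N" and fin: "finite (carrier N)" and X: "X = phi -` T"
    using assms(2) by (auto simp: recognized_by_def monoid_morphism_def free_monoid_def)
  define R where "R = kernel (\<lambda>a. phi [a])"
  have "range (\<lambda>a. phi [a]) \<subseteq> carrier N"
    using hom by (auto simp: hom_def free_monoid_def)
  then have "finite (UNIV // R)"
    unfolding R_def using fin finite_quotient_kernel finite_subset by blast
  moreover have "proj R -` proj R ` X = X"
    unfolding X R_def
    by (rule vimage_image_vimage_eq) (metis free_monoid_hom_eqI[OF hom] proj_kernel_eq_iff)
  ultimately show ?thesis
    using equiv_kernel unfolding R_def by metis
qed

end
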